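(* Let $n,m\ge2$, $s>0$. The function $f:\Omega_{L_n,m}\to\mathbb R$, \[f(\xi)=\sum_{k=1}^{n-1}\sin\Big(\frac{\pi k}{n}\Big)\Big(\sum_{i=1}^k\xi(i)-\frac{mk}{n}\Big),\] is an eigenfunction of the generator $\mathcal L^{\mathrm{BB}(L_n,s,m)}$ with eigenvalue $\lambda=\frac{1}{n-1}\big(\cos(\pi/n)-1\big)$, i.e. $\mathcal L^{\mathrm{BB}(L_n,s,m)}f=\lambda f$.
   Context: $L_n$ is the line graph on $\{1,\dots,n\}$ with edges $\{k,k+1\}$, all weights 1. $\Omega_{L_n,m}=\{\xi\in\mathbb N_0^{\{1,\dots,n\}}:\sum_i\xi(i)=m\}$. $\mathcal L^{\mathrm{BB}(L_n,s,m)}g=\sum_{k=1}^{n-1}\frac{1}{n-1}(\mathcal P_{\{k,k+1\}}g-g)$, where $\mathcal P_{\{k,k+1\}}g(\xi)=\mathbb E[g(\xi')]$ with $\xi'(k)=X$, $\xi'(k+1)=\xi(k)+\xi(k+1)-X$, $\xi'(j)=\xi(j)$ otherwise, and $X\sim\mathrm{BetaBin}(\xi(k)+\xi(k+1),s,s)$. *)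

theory Defs
  imports "HOL-Analysis.Analysis"
begin

definition Omega :: "nat \<Rightarrow> nat \<Rightarrow> (nat \<Rightarrow> nat) set" where
  "Omega n m = {\<xi>. (\<forall>i. i \<notin> {1..n} \<longrightarrow> \<xi> i = 0) \<and> (\<Sum>i=1..n. \<xi> i) = m}"

definition betabin_pmf :: "nat \<Rightarrow> real \<Rightarrow> real \<Rightarrow> nat \<Rightarrow> real" where
  "betabin_pmf N a b j = real (N choose j) * Beta (real j + a) (real (N - j) + b) / Beta a b"

definition P_edge :: "real \<Rightarrow> nat \<Rightarrow> ((nat \<Rightarrow> nat) \<Rightarrow> real) \<Rightarrow> (nat \<Rightarrow> nat) \<Rightarrow> real" where
  "P_edge s k g \<xi> =
     (let N = \<xi> k + \<xi> (k+1) in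
      \<Sum>j=0..N. betabin_pmf N s s j * g (\<xi>(k := j, k+1 := N - j)))"

definition L_BB :: "nat \<Rightarrow> real \<Rightarrow> ((nat \<Rightarrow> nat) \<Rightarrow> real) \<Rightarrow> (nat \<Rightarrow> nat) \<Rightarrow> real" where
  "L_BB n s g \<xi> = (\<Sum>k=1..n-1. (1 / real (n - 1)) * (P_edge s k g \<xi> - g \<xi>))"

end

theory Submission imports Defs begin

text \<open>
  Resampling the edge \<open>{k, k+1}\<close> only moves mass between \<open>k\<close> and \<open>k+1\<close>, so among the
  centred heights \<open>h(j) = \<xi>(1) + \<dots> + \<xi>(j) - m j / n\<close> it changes only \<open>h(k)\<close>, and it does so
  linearly in the resampled value \<open>X\<close>. A symmetric Beta-binomial variable has mean half of
  its total, hence for every weighted height functional \<open>F = \<Sum>\<^sub>k w(k) h(k)\<close> the generator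
  is a discrete Laplacian: \<open>L F = (1/(n-1)) \<Sum>\<^sub>k w(k) (h(k+1) - 2h(k) + h(k-1)) / 2\<close>.
  Summation by parts, with \<open>h(0) = h(n) = 0\<close>, moves the Laplacian onto the weights, and
  \<open>w(k) = sin(\<pi> k / n)\<close> is a Dirichlet eigenvector of it with eigenvalue \<open>2 (cos(\<pi>/n) - 1)\<close>.
\<close>

lemma Gamma_plus_of_nat:
  fixes x :: real
  assumes "x > 0"
  shows "Gamma (x + real k) = pochhammer x k * Gamma x"
proof -
  have "x \<notin> \<int>\<^sub>\<le>\<^sub>0" using assms by (auto elim!: nonpos_Ints_cases)
  then show ?thesis using pochhammer_Gamma[of x k] Gamma_real_pos[OF assms] by simp
qed

lemma betabin_pmf_pochhammer:
  assumes "a > 0" "b > 0" "j \<le> N"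
  shows "betabin_pmf N a b j
           = real (N choose j) * pochhammer a j * pochhammer b (N - j) / pochhammer (a + b) N"
proof -
  have Gamma_pos: "Gamma a > 0" "Gamma b > 0" "Gamma (a + b) > 0" using assms by auto
  have "pochhammer (a + b) N > 0" using assms by (simp add: pochhammer_pos)
  moreover have "Gamma (real j + a + (real (N - j) + b)) = pochhammer (a + b) N * Gamma (a + b)"
    using Gamma_plus_of_nat[of "a + b" N] assms by (simp add: algebra_simps of_nat_diff)
  moreover have "Gamma (real j + a) = pochhammer a j * Gamma a"
    using Gamma_plus_of_nat[of a j] assms by (simp add: add.commute)
  moreover have "Gamma (real (N - j) + b) = pochhammer b (N - j) * Gamma b"
    using Gamma_plus_of_nat[of b "N - j"] assms by (simp add: add.commute)
  ultimately show ?thesis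
    using Gamma_pos unfolding betabin_pmf_def Beta_def by (simp add: divide_simps)
qed

lemma sum_betabin_pmf:
  assumes "a > 0" "b > 0"
  shows "(\<Sum>j=0..N. betabin_pmf N a b j) = 1"
proof -
  have "(\<Sum>j=0..N. betabin_pmf N a b j)
          = (\<Sum>j\<le>N. real (N choose j) * pochhammer a j * pochhammer b (N - j)) / pochhammer (a + b) N"
    unfolding sum_divide_distrib atLeast0AtMost
    by (rule sum.cong) (simp_all add: betabin_pmf_pochhammer assms)
  also have "\<dots> = 1"
    using pochhammer_pos[of "a + b" N] assms by (simp flip: pochhammer_binomial_sum)
  finally show ?thesis .
qed

lemma betabin_pmf_symmetric:
  assumes "j \<le> N"
  shows "betabin_pmf N s s (N - j) = betabin_pmf N s s j"
proof -
  have "N choose (N - j) = N choose j" "N - (N - j) = j"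
    using assms by (simp_all add: binomial_symmetric[symmetric])
  then show ?thesis unfolding betabin_pmf_def by (simp only: Beta_commute[of "real (N - j) + s"])
qed

lemma betabin_mean_symmetric:
  assumes "s > 0"
  shows "(\<Sum>j=0..N. betabin_pmf N s s j * real j) = real N / 2"
proof -
  have "(\<Sum>j=0..N. betabin_pmf N s s j * real j)
          = (\<Sum>j=0..N. betabin_pmf N s s (N - j) * real (N - j))"
    by (rule sum.reindex_bij_witness[of _ "\<lambda>j. N - j" "\<lambda>j. N - j"]) auto
  also have "\<dots> = (\<Sum>j=0..N. betabin_pmf N s s j * (real N - real j))"
    by (rule sum.cong) (auto simp: betabin_pmf_symmetric of_nat_diff)
  also have "\<dots> = real N * (\<Sum>j=0..N. betabin_pmf N s s j) - (\<Sum>j=0..N. betabin_pmf N s s j * real j)"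
    by (simp add: algebra_simps sum_subtractf sum_distrib_left)
  finally show ?thesis using sum_betabin_pmf[OF assms assms] by simp
qed

lemma partial_sum_move_mass:
  fixes \<xi> :: "nat \<Rightarrow> nat"
  assumes "k \<ge> 1" "j \<le> \<xi> k + \<xi> (k+1)"
  shows "(\<Sum>i=1..q. real ((\<xi>(k := j, k+1 := \<xi> k + \<xi> (k+1) - j)) i))
           = (\<Sum>i=1..q. real (\<xi> i)) + (if q = k then real j - real (\<xi> k) else 0)"
proof -
  define d where "d = real j - real (\<xi> k)"
  have "(\<Sum>i=1..q. real ((\<xi>(k := j, k+1 := \<xi> k + \<xi> (k+1) - j)) i))
          = (\<Sum>i=1..q. real (\<xi> i) + (if i = k then d else 0) - (if i = k+1 then d else 0))"
    using assms(2) by (intro sum.cong) (auto simp: d_def of_nat_diff)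
  also have "\<dots> = (\<Sum>i=1..q. real (\<xi> i)) + (if k \<le> q then d else 0) - (if k + 1 \<le> q then d else 0)"
    using assms(1) by (simp add: sum.distrib sum_subtractf)
  finally show ?thesis by (simp add: d_def)
qed

definition height :: "nat \<Rightarrow> nat \<Rightarrow> (nat \<Rightarrow> nat) \<Rightarrow> nat \<Rightarrow> real" where
  "height n m \<xi> q = (\<Sum>i=1..q. real (\<xi> i)) - real m * real q / real n"

definition height_functional :: "nat \<Rightarrow> nat \<Rightarrow> (nat \<Rightarrow> real) \<Rightarrow> (nat \<Rightarrow> nat) \<Rightarrow> real" where
  "height_functional n m w \<xi> = (\<Sum>q=1..n-1. w q * height n m \<xi> q)"

lemma height_functional_move_mass:
  assumes "k \<in> {1..n-1}" "j \<le> \<xi> k + \<xi> (k+1)"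
  shows "height_functional n m w (\<xi>(k := j, k+1 := \<xi> k + \<xi> (k+1) - j))
           = height_functional n m w \<xi> + w k * (real j - real (\<xi> k))"
proof -
  have "height_functional n m w (\<xi>(k := j, k+1 := \<xi> k + \<xi> (k+1) - j))
          = (\<Sum>q=1..n-1. w q * height n m \<xi> q + (if q = k then w k * (real j - real (\<xi> k)) else 0))"
    unfolding height_functional_def height_def
    using assms partial_sum_move_mass[of k j \<xi>] by (intro sum.cong) (auto simp: algebra_simps)
  then show ?thesis using assms by (simp add: sum.distrib height_functional_def)
qed

lemma P_edge_height_functional:
  assumes "s > 0" "k \<in> {1..n-1}"
  shows "P_edge s k (height_functional n m w) \<xi>
           = height_functional n m w \<xi> + w k * (real (\<xi> (k+1)) - real (\<xi> k)) / 2"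
proof -
  define N where "N = \<xi> k + \<xi> (k+1)"
  define p where "p = betabin_pmf N s s"
  define F where "F = height_functional n m w \<xi>"
  have "P_edge s k (height_functional n m w) \<xi> = (\<Sum>j=0..N. p j * (F + w k * (real j - real (\<xi> k))))"
    unfolding P_edge_def Let_def N_def p_def F_def
    by (intro sum.cong refl) (subst height_functional_move_mass[OF assms(2)], auto)
  also have "\<dots> = F * (\<Sum>j=0..N. p j) + w k * (\<Sum>j=0..N. p j * real j) - w k * real (\<xi> k) * (\<Sum>j=0..N. p j)"
    by (simp add: algebra_simps sum.distrib sum_subtractf sum_distrib_left)
  also have "\<dots> = F + w k * (real (\<xi> (k+1)) - real (\<xi> k)) / 2"
    unfolding p_def sum_betabin_pmf[OF assms(1) assms(1)] betabin_mean_symmetric[OF assms(1)] N_def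
    by (simp add: field_simps)
  finally show ?thesis unfolding F_def .
qed

lemma sum_times_second_difference_symmetric:
  fixes a b :: "nat \<Rightarrow> real"
  assumes "a 0 = 0" "a q = 0" "b 0 = 0" "b q = 0" "q \<ge> 1"
  shows "(\<Sum>k=1..q-1. a k * (b (k+1) - 2 * b k + b (k-1)))
           = (\<Sum>k=1..q-1. b k * (a (k+1) - 2 * a k + a (k-1)))"
proof -
  have telescope: "(\<Sum>k=1..p. f k * g (Suc k) - f (k-1) * g k) = f p * g (Suc p) - f 0 * g 1"
    for f g :: "nat \<Rightarrow> real" and p
    by (induction p) auto
  have "(\<Sum>k=1..q-1. a k * (b (k+1) - 2 * b k + b (k-1)) - b k * (a (k+1) - 2 * a k + a (k-1)))
          = (\<Sum>k=1..q-1. a k * b (Suc k) - a (k-1) * b k) - (\<Sum>k=1..q-1. b k * a (Suc k) - b (k-1) * a k)"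
    by (simp add: sum_subtractf[symmetric] algebra_simps)
  also have "\<dots> = 0"
    using assms telescope[of a b "q-1"] telescope[of b a "q-1"] by simp
  finally show ?thesis by (simp add: sum_subtractf)
qed

lemma L_BB_height_functional:
  assumes "s > 0" "n \<ge> 2" "\<xi> \<in> Omega n m" "w 0 = 0" "w n = 0"
  shows "L_BB n s (height_functional n m w) \<xi>
           = 1 / real (n - 1) * (\<Sum>k=1..n-1. height n m \<xi> k * (w (k+1) - 2 * w k + w (k-1)) / 2)"
proof -
  define h where "h = height n m \<xi>"
  have h_step: "h (Suc k) - h k = real (\<xi> (Suc k)) - real m / real n" for k
    using assms(2) unfolding h_def height_def by (simp add: field_simps)
  have "h 0 = 0" unfolding h_def height_def by simp
  moreover have "h n = 0"
    using assms(2,3) unfolding h_def height_def Omega_def by (simp flip: of_nat_sum)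
  moreover have "real (\<xi> (k+1)) - real (\<xi> k) = h (k+1) - 2 * h k + h (k-1)" if "k \<ge> 1" for k
    using h_step[of k] h_step[of "k-1"] that by simp
  ultimately have "(\<Sum>k=1..n-1. w k * (real (\<xi> (k+1)) - real (\<xi> k)))
                     = (\<Sum>k=1..n-1. h k * (w (k+1) - 2 * w k + w (k-1)))"
    using assms(2,4,5) sum_times_second_difference_symmetric[of w n h] by simp
  then show ?thesis
    using assms(1) unfolding L_BB_def h_def
    by (simp add: P_edge_height_functional sum_distrib_left sum_divide_distrib[symmetric] mult.commute)
qed

lemma sin_second_difference:
  assumes "k \<ge> 1"
  shows "sin (c * real (k+1)) - 2 * sin (c * real k) + sin (c * real (k-1))
           = 2 * (cos c - 1) * sin (c * real k)"
proof -
  have "sin (c * real (k+1)) + sin (c * real (k-1)) = sin (c * real k + c) + sin (c * real k - c)"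
    using assms by (simp add: of_nat_diff algebra_simps)
  also have "\<dots> = 2 * cos c * sin (c * real k)"
    unfolding sin_add sin_diff by simp
  finally show ?thesis by (simp add: algebra_simps)
qed

theorem mainTheorem11:
  fixes n m :: nat and s :: real
  assumes "n \<ge> 2" and "m \<ge> 2" and "s > 0"
  defines "f \<equiv> (\<lambda>\<xi>::nat \<Rightarrow> nat. \<Sum>k=1..n-1. sin (pi * real k / real n) *
                 ((\<Sum>i=1..k. real (\<xi> i)) - real m * real k / real n))"
  shows "\<forall>\<xi>\<in>Omega n m. L_BB n s f \<xi> = (1 / real (n - 1)) * (cos (pi / real n) - 1) * f \<xi>"
proof
  fix \<xi> assume \<xi>: "\<xi> \<in> Omega n m"
  define w where "w k = sin (pi / real n * real k)" for k
  have f_eq: "f = height_functional n m w"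
    unfolding f_def height_functional_def height_def w_def by (simp add: mult.commute)
  have "w 0 = 0" "w n = 0" using assms(1) unfolding w_def by auto
  moreover have "w (k+1) - 2 * w k + w (k-1) = 2 * (cos (pi / real n) - 1) * w k" if "k \<ge> 1" for k
    unfolding w_def by (rule sin_second_difference[OF that])
  ultimately have "L_BB n s f \<xi>
      = 1 / real (n - 1) * (\<Sum>k=1..n-1. height n m \<xi> k * (2 * (cos (pi / real n) - 1) * w k) / 2)"
    unfolding f_eq using L_BB_height_functional[OF assms(3,1) \<xi>] by simp
  also have "\<dots> = 1 / real (n - 1) * (cos (pi / real n) - 1) * (\<Sum>k=1..n-1. w k * height n m \<xi> k)"
    using assms(1) unfolding sum_distrib_left by (intro sum.cong refl) (simp add: field_simps)
  finally show "L_BB n s f \<xi> = (1 / real (n - 1)) * (cos (pi / real n) - 1) * f \<xi>"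
    unfolding f_eq height_functional_def .
qed

end
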